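(* Let $\Sigma_1$ and $\Sigma_2$ be trees with $n$ vertices each containing exactly one marked vertex. If $\Sigma_1^*\cong\Sigma_2^*$, then $\Sigma_1\cong\Sigma_2$ (as trees with a marked vertex).
   Context: For a tree $\Sigma$ with exactly one marked vertex $m$, the dual graph $\Sigma^*$ is constructed as follows: its vertices are the edges of $\Sigma$, two joined by a simple edge iff the edges of $\Sigma$ share an endpoint; in addition there is one extra vertex $v$ (standing for the marked vertex), joined by a 2-fold edge to each vertex of $\Sigma^*$ corresponding to an edge of $\Sigma$ incident to $m$. Isomorphisms of dual graphs preserve edge multiplicities. *)

theory Defs
  imports Main
begin

definition simple_graph :: "'a set \<Rightarrow> 'a set set \<Rightarrow> bool" where
  "simple_graph V E \<longleftrightarrow> finite V \<and> (\<forall>e\<in>E. e \<subseteq> V \<and> card e = 2)"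

fun is_walk :: "'a set set \<Rightarrow> 'a list \<Rightarrow> bool" where
  "is_walk E [] = False"
| "is_walk E [x] = True"
| "is_walk E (x # y # xs) = ({x, y} \<in> E \<and> is_walk E (y # xs))"

definition connected_graph :: "'a set \<Rightarrow> 'a set set \<Rightarrow> bool" where
  "connected_graph V E \<longleftrightarrow>
     (\<forall>u\<in>V. \<forall>v\<in>V. \<exists>xs. is_walk E xs \<and> set xs \<subseteq> V \<and> hd xs = u \<and> last xs = v)"

definition is_cycle :: "'a set set \<Rightarrow> 'a list \<Rightarrow> bool" where
  "is_cycle E xs \<longleftrightarrow> length xs \<ge> 3 \<and> distinct xs \<and> is_walk E xs \<and> {last xs, hd xs} \<in> E"

definition tree :: "'a set \<Rightarrow> 'a set set \<Rightarrow> bool" where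
  "tree V E \<longleftrightarrow> simple_graph V E \<and> V \<noteq> {} \<and> connected_graph V E \<and> \<not> (\<exists>xs. is_cycle E xs)"

definition marked_tree :: "'a set \<Rightarrow> 'a set set \<Rightarrow> 'a \<Rightarrow> bool" where
  "marked_tree V E m \<longleftrightarrow> tree V E \<and> m \<in> V"

text \<open>Dual graph (a multigraph): vertices are Some e for edges e of the tree, plus None for the
  extra vertex v standing for the marked vertex.\<close>
definition dual_vertices :: "'a set set \<Rightarrow> 'a set option set" where
  "dual_vertices E = insert None (Some ` E)"

fun dual_mult :: "'a set set \<Rightarrow> 'a \<Rightarrow> 'a set option \<Rightarrow> 'a set option \<Rightarrow> nat" where
  "dual_mult E m (Some e) (Some f) = (if e \<noteq> f \<and> e \<inter> f \<noteq> {} then 1 else 0)"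
| "dual_mult E m None (Some f) = (if m \<in> f then 2 else 0)"
| "dual_mult E m (Some e) None = (if m \<in> e then 2 else 0)"
| "dual_mult E m None None = 0"

definition dual_iso :: "'a set set \<Rightarrow> 'a \<Rightarrow> 'b set set \<Rightarrow> 'b \<Rightarrow> bool" where
  "dual_iso E1 m1 E2 m2 \<longleftrightarrow>
     (\<exists>\<phi>. bij_betw \<phi> (dual_vertices E1) (dual_vertices E2) \<and>
        (\<forall>x\<in>dual_vertices E1. \<forall>y\<in>dual_vertices E1.
            dual_mult E2 m2 (\<phi> x) (\<phi> y) = dual_mult E1 m1 x y))"

definition marked_tree_iso :: "'a set \<Rightarrow> 'a set set \<Rightarrow> 'a \<Rightarrow> 'b set \<Rightarrow> 'b set set \<Rightarrow> 'b \<Rightarrow> bool" where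
  "marked_tree_iso V1 E1 m1 V2 E2 m2 \<longleftrightarrow>
     (\<exists>f. bij_betw f V1 V2 \<and> f m1 = m2 \<and>
        (\<forall>u\<in>V1. \<forall>v\<in>V1. {u, v} \<in> E1 \<longleftrightarrow> {f u, f v} \<in> E2))"

end

theory Submission
  imports Defs
begin

text \<open>Root the tree at the marked vertex \<open>m\<close> and explore its line graph breadth-first,
  starting from the edges through \<open>m\<close>. An edge found in layer \<open>k\<close> has exactly one end
  reached by the earlier layers, since otherwise those layers would close a cycle with it; call
  the other end its far end. Far ends give a bijection from the edges onto the vertices other
  than \<open>m\<close>, and the near end of an edge is \<open>m\<close> or the far end of an earlier edge meeting
  it. All of this is expressed through the line graph and the set of edges at \<open>m\<close>, which a
  dual isomorphism preserves once it fixes the extra vertex. It can move that vertex only when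
  the tree is a single edge, because double edges join the extra vertex to tree edges while
  simple edges join tree edges to each other. Sending \<open>m\<^sub>1\<close> to \<open>m\<^sub>2\<close> and far ends to
  far ends is then an isomorphism of marked trees.\<close>

section \<open>Walks\<close>

lemma is_walk_Cons_iff:
  "is_walk E (x # xs) \<longleftrightarrow> xs = [] \<or> {x, hd xs} \<in> E \<and> is_walk E xs"
  by (cases xs) auto

lemma is_walk_nonempty: "is_walk E xs \<Longrightarrow> xs \<noteq> []"
  by (cases xs) auto

lemma is_walk_mono: "is_walk E xs \<Longrightarrow> E \<subseteq> F \<Longrightarrow> is_walk F xs"
  by (induction E xs rule: is_walk.induct) auto

lemma is_walk_snoc: "is_walk E xs \<Longrightarrow> {last xs, y} \<in> E \<Longrightarrow> is_walk E (xs @ [y])"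
  by (induction E xs rule: is_walk.induct) auto

lemma is_walk_rev: "is_walk E xs \<Longrightarrow> is_walk E (rev xs)"
proof (induction E xs rule: is_walk.induct)
  case (3 E x y xs)
  then show ?case
    using is_walk_snoc[of E "rev (y # xs)" x] by (simp add: insert_commute)
qed auto

lemma is_walk_append:
  "is_walk E xs \<Longrightarrow> is_walk E ys \<Longrightarrow> {last xs, hd ys} \<in> E \<Longrightarrow> is_walk E (xs @ ys)"
  by (induction E xs rule: is_walk.induct) (auto simp: is_walk_Cons_iff dest: is_walk_nonempty)

lemma is_walk_suffix: "is_walk E (xs @ ys) \<Longrightarrow> ys \<noteq> [] \<Longrightarrow> is_walk E ys"
  by (induction xs) (auto simp: is_walk_Cons_iff)

lemma is_walk_join:
  assumes "is_walk E xs" "is_walk E ys" "hd xs = hd ys"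
  obtains zs where "is_walk E zs" "hd zs = last xs" "last zs = last ys"
proof (cases "tl ys")
  case Nil
  then have "ys = [hd xs]"
    using assms(2,3) is_walk_nonempty by (metis list.collapse)
  with assms(1) show ?thesis
    by (intro that[of "rev xs"]) (auto simp: hd_rev last_rev is_walk_rev)
next
  case (Cons z r)
  then have ys: "ys = hd xs # z # r"
    using assms(2,3) is_walk_nonempty by (metis list.collapse)
  then have "is_walk E (hd xs # z # r)"
    using assms(2) by metis
  moreover have "last (rev xs) = hd xs"
    using is_walk_nonempty[OF assms(1)] by (simp add: last_rev)
  ultimately have "is_walk E (rev xs @ z # r)"
    using is_walk_append[OF is_walk_rev[OF assms(1)], of "z # r"] by simp
  with ys is_walk_nonempty[OF assms(1)] show ?thesis
    by (intro that[of "rev xs @ z # r"]) (auto simp: hd_rev)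
qed

lemma is_walk_distinct:
  assumes "is_walk E xs"
  obtains ys where "is_walk E ys" "distinct ys" "hd ys = hd xs" "last ys = last xs"
  using assms
proof (induction xs arbitrary: thesis)
  case (Cons x xs)
  show ?case
  proof (cases "xs = []")
    case True
    then show ?thesis by (intro Cons.prems(1)[of "[x]"]) auto
  next
    case False
    then have x: "{x, hd xs} \<in> E" and "is_walk E xs"
      using Cons.prems(2) by (auto simp: is_walk_Cons_iff)
    then obtain ys where ys: "is_walk E ys" "distinct ys" "hd ys = hd xs" "last ys = last xs"
      using Cons.IH by blast
    show ?thesis
    proof (cases "x \<in> set ys")
      case True
      then obtain p q where "ys = p @ x # q" by (meson split_list)
      with ys False show ?thesis
        by (intro Cons.prems(1)[of "x # q"]) (auto dest: is_walk_suffix)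
    next
      case False
      with ys x \<open>xs \<noteq> []\<close> show ?thesis
        by (intro Cons.prems(1)[of "x # ys"]) (auto simp: is_walk_Cons_iff dest: is_walk_nonempty)
    qed
  qed
qed simp

lemma is_walk_closed_set:
  assumes "is_walk E xs" "hd xs \<in> S" "\<And>e. e \<in> E \<Longrightarrow> e \<inter> S \<noteq> {} \<Longrightarrow> e \<subseteq> S"
  shows "set xs \<subseteq> S"
  using assms by (induction E xs rule: is_walk.induct) auto

lemma connected_graph_closed_subset:
  assumes "connected_graph V E" "m \<in> V" "m \<in> S" "\<And>e. e \<in> E \<Longrightarrow> e \<inter> S \<noteq> {} \<Longrightarrow> e \<subseteq> S"
  shows "V \<subseteq> S"
proof
  fix v assume "v \<in> V"
  then obtain xs where "is_walk E xs" "hd xs = m" "last xs = v"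
    using assms(1,2) unfolding connected_graph_def by blast
  with assms(3,4) show "v \<in> S"
    using is_walk_closed_set[of E xs S] last_in_set[OF is_walk_nonempty] by blast
qed

lemma is_walk_extend:
  assumes "is_walk F xs" "last xs = z" "e \<in> F" "card e = 2" "z \<in> e" "x \<in> e"
  shows "\<exists>ys. is_walk F ys \<and> hd ys = hd xs \<and> last ys = x"
proof (cases "x = z")
  case False
  with assms(4-6) have "e = {last xs, x}"
    using assms(2) by (auto simp: card_2_iff)
  with assms(1,3) show ?thesis
    using is_walk_snoc[of F xs x] is_walk_nonempty[OF assms(1)] by (intro exI[of _ "xs @ [x]"]) simp
qed (use assms in blast)

section \<open>Trees\<close>

lemma card_2_other: "card e = 2 \<Longrightarrow> x \<in> e \<Longrightarrow> \<exists>y. y \<noteq> x \<and> e = {x, y}"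
  by (auto simp: card_2_iff)

lemma tree_edge:
  assumes "tree V E" "e \<in> E"
  shows "card e = 2" "e \<subseteq> V"
  using assms unfolding tree_def simple_graph_def by auto

lemma tree_no_detour:
  assumes "tree V E" "{u, v} \<in> E" "is_walk F xs" "F \<subseteq> E - {{u, v}}" "hd xs = u" "last xs = v"
  shows False
proof -
  have "u \<noteq> v"
    using tree_edge(1)[OF assms(1,2)] by auto
  obtain ys where ys: "is_walk F ys" "distinct ys" "hd ys = u" "last ys = v"
    using is_walk_distinct[OF assms(3)] assms(5,6) by metis
  then obtain w r where ys_eq: "ys = u # w # r"
    using \<open>u \<noteq> v\<close> is_walk_nonempty by (metis last_ConsL list.collapse)
  show False
  proof (cases "r = []")
    case True
    with ys ys_eq assms(4) show False by auto
  next
    case False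
    then have "length ys \<ge> 3"
      using ys_eq by (cases r) auto
    with ys assms(2,4) have "is_cycle E ys"
      using is_walk_mono[OF ys(1)] unfolding is_cycle_def by (auto simp: insert_commute)
    with assms(1) show False
      unfolding tree_def by blast
  qed
qed

lemma tree_single_edge:
  assumes "tree V E" "m \<in> V" "e \<in> E" "\<And>f. f \<in> E \<Longrightarrow> f \<noteq> e \<Longrightarrow> e \<inter> f = {} \<and> m \<notin> f"
  shows "E = {e}"
proof -
  have "V \<subseteq> insert m e"
    using assms connected_graph_closed_subset[of V E m "insert m e"]
    unfolding tree_def by blast
  have "f = e" if "f \<in> E" for f
  proof (rule ccontr)
    assume "f \<noteq> e"
    with assms(4) that have "f \<inter> insert m e = {}" by blast
    moreover have "f \<subseteq> insert m e"
      using \<open>V \<subseteq> insert m e\<close> tree_edge(2)[OF assms(1) that] by blast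
    ultimately have "f = {}" by blast
    with tree_edge(1)[OF assms(1) that] show False by simp
  qed
  with assms(3) show ?thesis by blast
qed

section \<open>Breadth-first layers of the line graph\<close>

definition edges_meet :: "'a set \<Rightarrow> 'a set \<Rightarrow> bool" where
  "edges_meet e f \<longleftrightarrow> e \<noteq> f \<and> e \<inter> f \<noteq> {}"

text \<open>The layers are defined through the line graph and the edges at \<open>m\<close> only, so that
  isomorphisms of dual graphs transport them.\<close>
fun edges_within :: "'a set set \<Rightarrow> 'a \<Rightarrow> nat \<Rightarrow> 'a set set" where
  "edges_within E m 0 = {e \<in> E. m \<in> e}"
| "edges_within E m (Suc k) =
     edges_within E m k \<union> {e \<in> E. \<exists>f \<in> edges_within E m k. edges_meet e f}"

fun reached :: "'a set set \<Rightarrow> 'a \<Rightarrow> nat \<Rightarrow> 'a set" where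
  "reached E m 0 = {m}"
| "reached E m (Suc k) = insert m (\<Union>(edges_within E m k))"

definition edge_depth :: "'a set set \<Rightarrow> 'a \<Rightarrow> 'a set \<Rightarrow> nat" where
  "edge_depth E m e = (LEAST k. e \<in> edges_within E m k)"

definition near_end :: "'a set set \<Rightarrow> 'a \<Rightarrow> 'a set \<Rightarrow> 'a" where
  "near_end E m e = (THE x. x \<in> e \<and> x \<in> reached E m (edge_depth E m e))"

definition far_end :: "'a set set \<Rightarrow> 'a \<Rightarrow> 'a set \<Rightarrow> 'a" where
  "far_end E m e = (THE x. x \<in> e \<and> x \<notin> reached E m (edge_depth E m e))"

lemma edges_within_subset: "edges_within E m k \<subseteq> E"
  by (induction k) auto

lemma edges_within_mono: "k \<le> l \<Longrightarrow> edges_within E m k \<subseteq> edges_within E m l"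
  by (rule lift_Suc_mono_le[of "edges_within E m"]) auto

lemma marker_reached: "m \<in> reached E m k"
  by (cases k) auto

lemma reached_mono: "k \<le> l \<Longrightarrow> reached E m k \<subseteq> reached E m l"
proof (rule lift_Suc_mono_le[of "reached E m"])
  show "reached E m k \<subseteq> reached E m (Suc k)" for k
    using edges_within_mono[of k "Suc k" E m] by (cases k) auto
qed

lemma reached_SucI: "e \<in> edges_within E m k \<Longrightarrow> x \<in> e \<Longrightarrow> x \<in> reached E m (Suc k)"
  by auto

lemma edges_withinI:
  assumes "x \<in> reached E m k" "x \<in> e" "e \<in> E"
  shows "e \<in> edges_within E m k"
proof (cases k)
  case (Suc j)
  show ?thesis
  proof (cases "x = m")
    case True
    with assms have "e \<in> edges_within E m 0" by simp
    then show ?thesis using edges_within_mono[of 0 k E m] by blast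
  next
    case False
    with assms(1) Suc obtain f where f: "f \<in> edges_within E m j" "x \<in> f" by auto
    have "e = f \<or> edges_meet e f"
      using assms(2) f(2) by (auto simp: edges_meet_def)
    with f(1) assms(3) Suc show ?thesis by auto
  qed
qed (use assms in auto)

lemma edges_within_walk:
  assumes "tree V E" "e \<in> edges_within E m k" "x \<in> e"
  shows "\<exists>xs. is_walk (edges_within E m k) xs \<and> hd xs = m \<and> last xs = x"
proof -
  have "\<exists>z\<in>e. \<exists>xs. is_walk (edges_within E m k) xs \<and> hd xs = m \<and> last xs = z"
    using assms(2)
  proof (induction k arbitrary: e)
    case 0
    then show ?case by (intro bexI[of _ m] exI[of _ "[m]"]) auto
  next
    case (Suc k)
    have mono: "is_walk (edges_within E m k) xs \<Longrightarrow> is_walk (edges_within E m (Suc k)) xs" for xs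
      by (erule is_walk_mono) auto
    show ?case
    proof (cases "e \<in> edges_within E m k")
      case True
      then show ?thesis using Suc.IH mono by blast
    next
      case False
      with Suc.prems obtain f w where f: "f \<in> edges_within E m k" "w \<in> e" "w \<in> f"
        by (auto simp: edges_meet_def)
      then obtain z xs where xs: "z \<in> f" "is_walk (edges_within E m k) xs" "hd xs = m" "last xs = z"
        using Suc.IH by blast
      have "f \<in> edges_within E m (Suc k)" "card f = 2"
        using f(1) tree_edge(1)[OF assms(1) subsetD[OF edges_within_subset f(1)]] by auto
      then obtain ys where "is_walk (edges_within E m (Suc k)) ys" "hd ys = m" "last ys = w"
        using is_walk_extend[OF mono[OF xs(2)] xs(4) _ _ xs(1) f(3)] xs(3) by metis
      with f(2) show ?thesis by blast
    qed
  qed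
  then obtain z xs where xs: "z \<in> e" "is_walk (edges_within E m k) xs" "hd xs = m" "last xs = z"
    by blast
  have "card e = 2"
    using tree_edge(1)[OF assms(1) subsetD[OF edges_within_subset assms(2)]] .
  with xs assms(2,3) show ?thesis
    using is_walk_extend[OF xs(2) xs(4) assms(2)] by simp
qed

lemma reached_walk:
  assumes "tree V E" "x \<in> reached E m (Suc k)" "y \<in> reached E m (Suc k)"
  shows "\<exists>xs. is_walk (edges_within E m k) xs \<and> hd xs = x \<and> last xs = y"
proof -
  have from_marker: "\<exists>xs. is_walk (edges_within E m k) xs \<and> hd xs = m \<and> last xs = v"
    if "v \<in> reached E m (Suc k)" for v
  proof (cases "v = m")
    case False
    with that obtain e where "e \<in> edges_within E m k" "v \<in> e" by auto
    then show ?thesis using edges_within_walk[OF assms(1)] by blast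
  qed (auto intro: exI[of _ "[m]"])
  obtain xs ys where "is_walk (edges_within E m k) xs" "hd xs = m" "last xs = x"
    "is_walk (edges_within E m k) ys" "hd ys = m" "last ys = y"
    using from_marker[OF assms(2)] from_marker[OF assms(3)] by blast
  then show ?thesis
    using is_walk_join[of "edges_within E m k" xs ys] by metis
qed

lemma tree_reached_covers:
  assumes "tree V E" "m \<in> V"
  shows "V \<subseteq> (\<Union>k. reached E m k)"
proof (rule connected_graph_closed_subset[of V E m])
  show "connected_graph V E"
    using assms(1) unfolding tree_def by blast
  show "m \<in> (\<Union>k. reached E m k)"
    using marker_reached[of m E 0] by (rule UN_I[OF UNIV_I])
  fix e assume e: "e \<in> E" "e \<inter> (\<Union>k. reached E m k) \<noteq> {}"
  then obtain k x where "x \<in> reached E m k" "x \<in> e" by blast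
  then have "e \<in> edges_within E m k"
    using edges_withinI e(1) by metis
  then have "e \<subseteq> reached E m (Suc k)"
    by auto
  then show "e \<subseteq> (\<Union>k. reached E m k)" by blast
qed (rule assms(2))

lemma edge_depth_edges_within:
  assumes "tree V E" "m \<in> V" "e \<in> E"
  shows "e \<in> edges_within E m (edge_depth E m e)"
proof -
  obtain x where "x \<in> e"
    using tree_edge(1)[OF assms(1,3)] by (auto simp: card_2_iff)
  then have "x \<in> V"
    using tree_edge(2)[OF assms(1,3)] by blast
  then obtain k where "x \<in> reached E m k"
    using tree_reached_covers[OF assms(1,2)] by blast
  then have "e \<in> edges_within E m k"
    using \<open>x \<in> e\<close> assms(3) by (rule edges_withinI)
  then show ?thesis
    unfolding edge_depth_def by (rule LeastI)
qed

lemma edge_depth_le: "e \<in> edges_within E m k \<Longrightarrow> edge_depth E m e \<le> k"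
  unfolding edge_depth_def by (rule Least_le)

lemma not_edges_within_below_depth: "k < edge_depth E m e \<Longrightarrow> e \<notin> edges_within E m k"
  using edge_depth_le[of e E m k] by linarith

text \<open>This is where acyclicity enters: an edge first found in layer \<open>k + 1\<close> cannot join two
  vertices already reached, as the earlier layers connect them without using it.\<close>
lemma edge_split_by_depth:
  assumes "tree V E" "m \<in> V" "e \<in> E"
  obtains x y where "e = {x, y}" "x \<in> reached E m (edge_depth E m e)"
    "y \<notin> reached E m (edge_depth E m e)"
proof (cases "edge_depth E m e")
  case 0
  then have "m \<in> e"
    using edge_depth_edges_within[OF assms] by simp
  then obtain y where "e = {m, y}" "y \<noteq> m"
    using card_2_other[OF tree_edge(1)[OF assms(1,3)]] by blast
  moreover have "m \<in> reached E m (edge_depth E m e)" "y \<notin> reached E m (edge_depth E m e)"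
    using 0 \<open>y \<noteq> m\<close> by simp_all
  ultimately show ?thesis
    using that by blast
next
  case (Suc k)
  have "e \<in> edges_within E m (Suc k)" "e \<notin> edges_within E m k"
    using edge_depth_edges_within[OF assms] not_edges_within_below_depth[of k E m e] Suc
    by simp_all
  then obtain f z where f: "f \<in> edges_within E m k" "z \<in> e" "z \<in> f"
    by (auto simp: edges_meet_def)
  then obtain y where e: "e = {z, y}" "y \<noteq> z"
    using card_2_other[OF tree_edge(1)[OF assms(1,3)]] by blast
  have z: "z \<in> reached E m (Suc k)"
    using f by auto
  have "y \<notin> reached E m (Suc k)"
  proof
    assume "y \<in> reached E m (Suc k)"
    then obtain xs where xs: "is_walk (edges_within E m k) xs" "hd xs = z" "last xs = y"
      using reached_walk[OF assms(1) z] by blast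
    have "edges_within E m k \<subseteq> E - {e}"
      using edges_within_subset[of E m k] \<open>e \<notin> edges_within E m k\<close> by blast
    with xs assms(3) show False
      unfolding e(1) using tree_no_detour[OF assms(1)] by blast
  qed
  with z Suc have "z \<in> reached E m (edge_depth E m e)" "y \<notin> reached E m (edge_depth E m e)"
    by simp_all
  with e(1) show ?thesis
    using that by blast
qed

lemma near_far_end:
  assumes "tree V E" "m \<in> V" "e \<in> E"
  shows "e = {near_end E m e, far_end E m e}"
    and "near_end E m e \<in> reached E m (edge_depth E m e)"
    and "far_end E m e \<notin> reached E m (edge_depth E m e)"
proof -
  obtain x y where xy: "e = {x, y}" "x \<in> reached E m (edge_depth E m e)"
    "y \<notin> reached E m (edge_depth E m e)"
    using edge_split_by_depth[OF assms] .
  have "near_end E m e = x"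
    unfolding near_end_def using xy by (intro the_equality) auto
  moreover have "far_end E m e = y"
    unfolding far_end_def using xy by (intro the_equality) auto
  ultimately show "e = {near_end E m e, far_end E m e}"
    and "near_end E m e \<in> reached E m (edge_depth E m e)"
    and "far_end E m e \<notin> reached E m (edge_depth E m e)"
    using xy by simp_all
qed

lemma near_far_end_mem:
  assumes "tree V E" "m \<in> V" "e \<in> E"
  shows "near_end E m e \<in> e" "far_end E m e \<in> e"
  by (subst near_far_end(1)[OF assms]; simp)+

lemma far_end_in_vertices:
  assumes "tree V E" "m \<in> V" "e \<in> E"
  shows "far_end E m e \<in> V - {m}"
proof -
  have "far_end E m e \<in> V"
    using near_far_end_mem(2)[OF assms] tree_edge(2)[OF assms(1,3)] by blast
  moreover have "far_end E m e \<noteq> m"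
    using near_far_end(3)[OF assms] marker_reached[of m E "edge_depth E m e"] by auto
  ultimately show ?thesis by blast
qed

lemma near_end_eq_marker_iff:
  assumes "tree V E" "m \<in> V" "e \<in> E"
  shows "near_end E m e = m \<longleftrightarrow> m \<in> e"
proof
  assume "m \<in> e"
  with assms(3) have "edge_depth E m e = 0"
    using edge_depth_le[of e E m 0] by simp
  then show "near_end E m e = m"
    using near_far_end(2)[OF assms] by simp
qed (use near_far_end_mem(1)[OF assms] in simp)

lemma far_end_depth_le:
  assumes "tree V E" "m \<in> V" "e \<in> E" "e' \<in> E" "far_end E m e' \<in> e"
  shows "edge_depth E m e' \<le> edge_depth E m e"
proof -
  have "far_end E m e' \<in> reached E m (Suc (edge_depth E m e))"
    using reached_SucI[OF edge_depth_edges_within[OF assms(1-3)] assms(5)] .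
  then have "\<not> Suc (edge_depth E m e) \<le> edge_depth E m e'"
    using near_far_end(3)[OF assms(1,2,4)]
      reached_mono[of "Suc (edge_depth E m e)" "edge_depth E m e'" E m] by auto
  then show ?thesis by simp
qed

lemma far_end_inj_on:
  assumes "tree V E" "m \<in> V"
  shows "inj_on (far_end E m) E"
proof (rule inj_onI, rule ccontr)
  fix e e' assume e: "e \<in> E" "e' \<in> E" "far_end E m e = far_end E m e'" "e \<noteq> e'"
  note near_far = near_far_end[OF assms e(1)] and near_far' = near_far_end[OF assms e(2)]
  define v where "v = far_end E m e"
  have "far_end E m e' \<in> e" "far_end E m e \<in> e'"
    using near_far_end_mem(2)[OF assms e(1)] near_far_end_mem(2)[OF assms e(2)] e(3) by simp_all
  then have depth: "edge_depth E m e' = edge_depth E m e"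
    using far_end_depth_le[OF assms e(1,2)] far_end_depth_le[OF assms e(2,1)] by simp
  show False
  proof (cases "edge_depth E m e")
    case 0
    then have "near_end E m e = m" "near_end E m e' = m"
      using near_far(2) near_far'(2) depth by simp_all
    with e(3) have "{near_end E m e, far_end E m e} = {near_end E m e', far_end E m e'}"
      by simp
    then have "e = e'"
      by (simp only: near_far(1)[symmetric] near_far'(1)[symmetric])
    with e(4) show False ..
  next
    case (Suc k)
    have "near_end E m e \<in> reached E m (Suc k)" "near_end E m e' \<in> reached E m (Suc k)"
      using near_far(2) near_far'(2) depth Suc by simp_all
    then obtain xs where xs: "is_walk (edges_within E m k) xs"
      "hd xs = near_end E m e" "last xs = near_end E m e'"
      using reached_walk[OF assms(1)] by blast
    have "{last xs, v} \<in> insert e' (edges_within E m k)"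
      using xs(3) near_far'(1)[symmetric] e(3) v_def by simp
    then have walk: "is_walk (insert e' (edges_within E m k)) (xs @ [v])"
      by (rule is_walk_snoc[OF is_walk_mono[OF xs(1) subset_insertI]])
    have "e \<notin> edges_within E m k"
      using not_edges_within_below_depth[of k E m e] Suc by simp
    then have "insert e' (edges_within E m k) \<subseteq> E - {{near_end E m e, v}}"
      using edges_within_subset[of E m k] e(2,4) near_far(1)[symmetric] v_def by auto
    moreover have "hd (xs @ [v]) = near_end E m e" "last (xs @ [v]) = v"
      using xs(2) is_walk_nonempty[OF xs(1)] by simp_all
    moreover have "{near_end E m e, v} \<in> E"
      using e(1) near_far(1)[symmetric] v_def by simp
    ultimately show False
      using tree_no_detour[OF assms(1) _ walk] by blast
  qed
qed

lemma mem_edge_iff_near_far_end: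
  assumes "tree V E" "m \<in> V" "e \<in> E"
  shows "x \<in> e \<longleftrightarrow> x = near_end E m e \<or> x = far_end E m e"
  by (subst near_far_end(1)[OF assms]) simp

lemma far_end_image:
  assumes "tree V E" "m \<in> V"
  shows "far_end E m ` E = V - {m}"
proof (rule equalityI)
  show "far_end E m ` E \<subseteq> V - {m}"
    using far_end_in_vertices[OF assms] by (rule image_subsetI)
  have "reached E m k - {m} \<subseteq> far_end E m ` E" for k
  proof (induction k)
    case 0
    show ?case by simp
  next
    case (Suc k)
    show ?case
    proof
      fix v assume v: "v \<in> reached E m (Suc k) - {m}"
      then obtain e where e: "e \<in> edges_within E m k" "v \<in> e"
        by auto
      have "e \<in> E"
        using e(1) edges_within_subset[of E m k] by blast
      show "v \<in> far_end E m ` E"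
      proof (cases "v \<in> reached E m k")
        case True
        with v Suc.IH show ?thesis
          by blast
      next
        case False
        have "near_end E m e \<in> reached E m k"
          using near_far_end(2)[OF assms \<open>e \<in> E\<close>]
            reached_mono[OF edge_depth_le[OF e(1)], of E m] by blast
        with False e(2) have "v = far_end E m e"
          using mem_edge_iff_near_far_end[OF assms \<open>e \<in> E\<close>, of v] by blast
        with \<open>e \<in> E\<close> show ?thesis
          by (rule rev_image_eqI)
      qed
    qed
  qed
  then have "V - {m} \<subseteq> (\<Union>k. reached E m k - {m})"
    using tree_reached_covers[OF assms] by blast
  also have "\<dots> \<subseteq> far_end E m ` E"
    using \<open>\<And>k. reached E m k - {m} \<subseteq> far_end E m ` E\<close> by blast
  finally show "V - {m} \<subseteq> far_end E m ` E" .
qed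

text \<open>This recovers the incidences of the tree from its line graph and the layers.\<close>
lemma far_end_eq_near_end_iff:
  assumes "tree V E" "m \<in> V" "e \<in> E" "f \<in> E"
  shows "far_end E m f = near_end E m e \<longleftrightarrow>
    edges_meet f e \<and> edge_depth E m f < edge_depth E m e"
proof
  assume eq: "far_end E m f = near_end E m e"
  have "far_end E m f \<in> f \<inter> e"
    using near_far_end_mem[OF assms(1,2,4)] near_far_end_mem[OF assms(1-3)] eq by simp
  moreover have "f \<noteq> e"
    using eq near_far_end(2,3)[OF assms(1-3)] by auto
  moreover have "\<not> edge_depth E m e \<le> edge_depth E m f"
    using eq near_far_end(2)[OF assms(1-3)] near_far_end(3)[OF assms(1,2,4)]
      reached_mono[of "edge_depth E m e" "edge_depth E m f" E m] by auto
  ultimately show "edges_meet f e \<and> edge_depth E m f < edge_depth E m e"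
    unfolding edges_meet_def by auto
next
  assume "edges_meet f e \<and> edge_depth E m f < edge_depth E m e"
  then obtain w where w: "w \<in> f" "w \<in> e" and less: "edge_depth E m f < edge_depth E m e"
    unfolding edges_meet_def by blast
  have "w \<in> reached E m (Suc (edge_depth E m f))"
    using reached_SucI[OF edge_depth_edges_within[OF assms(1,2,4)] w(1)] .
  then have "w \<in> reached E m (edge_depth E m e)"
    using reached_mono[of "Suc (edge_depth E m f)" "edge_depth E m e" E m] less by auto
  then have "w = near_end E m e"
    using w(2) near_far_end(3)[OF assms(1-3)] mem_edge_iff_near_far_end[OF assms(1-3)] by auto
  moreover have "w \<noteq> near_end E m f"
  proof
    assume "w = near_end E m f"
    then have "e \<in> edges_within E m (edge_depth E m f)"
      using edges_withinI[OF near_far_end(2)[OF assms(1,2,4)] _ assms(3)] w(2) by simp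
    with less show False
      using edge_depth_le[of e E m] by fastforce
  qed
  ultimately show "far_end E m f = near_end E m e"
    using w(1) mem_edge_iff_near_far_end[OF assms(1,2,4)] by auto
qed

section \<open>Transport along line-graph isomorphisms\<close>

definition marked_line_graph_iso ::
    "('a set \<Rightarrow> 'b set) \<Rightarrow> 'a set set \<Rightarrow> 'a \<Rightarrow> 'b set set \<Rightarrow> 'b \<Rightarrow> bool" where
  "marked_line_graph_iso \<psi> E1 m1 E2 m2 \<longleftrightarrow> bij_betw \<psi> E1 E2 \<and>
     (\<forall>e\<in>E1. \<forall>f\<in>E1. edges_meet (\<psi> e) (\<psi> f) \<longleftrightarrow> edges_meet e f) \<and>
     (\<forall>e\<in>E1. m2 \<in> \<psi> e \<longleftrightarrow> m1 \<in> e)"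

lemma marked_line_graph_isoD:
  assumes "marked_line_graph_iso \<psi> E1 m1 E2 m2"
  shows "bij_betw \<psi> E1 E2"
    and "e \<in> E1 \<Longrightarrow> f \<in> E1 \<Longrightarrow> edges_meet (\<psi> e) (\<psi> f) \<longleftrightarrow> edges_meet e f"
    and "e \<in> E1 \<Longrightarrow> m2 \<in> \<psi> e \<longleftrightarrow> m1 \<in> e"
  using assms unfolding marked_line_graph_iso_def by blast+

lemma edges_within_image:
  assumes "marked_line_graph_iso \<psi> E1 m1 E2 m2"
  shows "\<psi> ` edges_within E1 m1 k = edges_within E2 m2 k"
proof (induction k)
  case 0
  from assms show ?case
    by (auto simp: marked_line_graph_iso_def bij_betw_def)
next
  case (Suc k)
  note iso = marked_line_graph_isoD[OF assms]
  have image: "\<psi> ` E1 = E2"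
    using iso(1) by (rule bij_betw_imp_surj_on)
  have sub: "edges_within E1 m1 k \<subseteq> E1"
    by (rule edges_within_subset)
  have "\<psi> ` {e \<in> E1. \<exists>f \<in> edges_within E1 m1 k. edges_meet e f}
      = {e \<in> E2. \<exists>f \<in> edges_within E2 m2 k. edges_meet e f}"
  proof (intro equalityI subsetI)
    fix x assume "x \<in> \<psi> ` {e \<in> E1. \<exists>f \<in> edges_within E1 m1 k. edges_meet e f}"
    then obtain e f where ef: "x = \<psi> e" "e \<in> E1" "f \<in> edges_within E1 m1 k" "edges_meet e f"
      by blast
    then have "edges_meet (\<psi> e) (\<psi> f)" "\<psi> f \<in> edges_within E2 m2 k"
      using iso(2)[of e f] sub Suc.IH by auto
    with ef(1,2) image show "x \<in> {e \<in> E2. \<exists>f \<in> edges_within E2 m2 k. edges_meet e f}"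
      by auto
  next
    fix x assume "x \<in> {e \<in> E2. \<exists>f \<in> edges_within E2 m2 k. edges_meet e f}"
    then obtain g where g: "x \<in> E2" "g \<in> edges_within E2 m2 k" "edges_meet x g"
      by blast
    from g(1) image obtain e where e: "e \<in> E1" "x = \<psi> e"
      by blast
    from g(2) Suc.IH obtain f where f: "f \<in> edges_within E1 m1 k" "g = \<psi> f"
      by blast
    have "edges_meet e f"
      using iso(2)[OF e(1) subsetD[OF sub f(1)]] g(3) e(2) f(2) by simp
    with e f show "x \<in> \<psi> ` {e \<in> E1. \<exists>f \<in> edges_within E1 m1 k. edges_meet e f}"
      by blast
  qed
  with Suc.IH show ?case
    by (simp add: image_Un)
qed

lemma edge_depth_image:
  assumes "marked_line_graph_iso \<psi> E1 m1 E2 m2" "e \<in> E1"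
  shows "edge_depth E2 m2 (\<psi> e) = edge_depth E1 m1 e"
proof -
  have "\<psi> e \<in> edges_within E2 m2 k \<longleftrightarrow> e \<in> edges_within E1 m1 k" for k
    using inj_on_image_mem_iff[OF bij_betw_imp_inj_on[OF marked_line_graph_isoD(1)[OF assms(1)]]
        assms(2) edges_within_subset[of E1 m1 k]]
    unfolding edges_within_image[OF assms(1)] .
  then show ?thesis
    unfolding edge_depth_def by simp
qed

lemma marked_tree_iso_if_edge_image:
  assumes f: "bij_betw f V1 V2" "f m1 = m2"
    and E1: "\<And>e. e \<in> E1 \<Longrightarrow> e \<subseteq> V1" and E2: "(`) f ` E1 = E2"
  shows "marked_tree_iso V1 E1 m1 V2 E2 m2"
proof -
  have "{u, v} \<in> E1 \<longleftrightarrow> {f u, f v} \<in> E2" if "u \<in> V1" "v \<in> V1" for u v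
  proof
    assume "{u, v} \<in> E1"
    then have "f ` {u, v} \<in> E2"
      using E2 by blast
    then show "{f u, f v} \<in> E2"
      by simp
  next
    assume "{f u, f v} \<in> E2"
    then obtain e where e: "e \<in> E1" "f ` e = f ` {u, v}"
      using E2 by auto
    have "{u, v} \<subseteq> V1"
      using that by simp
    with e(2) have "e = {u, v}"
      using inj_on_image_eq_iff[OF bij_betw_imp_inj_on[OF f(1)] E1[OF e(1)]] by blast
    with e(1) show "{u, v} \<in> E1"
      by simp
  qed
  with f show ?thesis
    unfolding marked_tree_iso_def by blast
qed

lemma far_end_eq_near_end_image:
  assumes t1: "tree V1 E1" "m1 \<in> V1" and t2: "tree V2 E2" "m2 \<in> V2"
    and iso: "marked_line_graph_iso \<psi> E1 m1 E2 m2" and e: "e \<in> E1" "e' \<in> E1"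
  shows "far_end E2 m2 (\<psi> e') = near_end E2 m2 (\<psi> e) \<longleftrightarrow> far_end E1 m1 e' = near_end E1 m1 e"
proof -
  note \<psi> = marked_line_graph_isoD[OF iso]
  have "\<psi> e \<in> E2" "\<psi> e' \<in> E2"
    using bij_betw_apply[OF \<psi>(1)] e by blast+
  then show ?thesis
    using far_end_eq_near_end_iff[OF t1 e] far_end_eq_near_end_iff[OF t2]
      \<psi>(2)[OF e(2,1)] edge_depth_image[OF iso e(1)] edge_depth_image[OF iso e(2)] by simp
qed

lemma bij_betw_if_point:
  assumes "bij_betw g (A - {a}) (B - {b})" "a \<in> A" "b \<in> B"
  shows "bij_betw (\<lambda>x. if x = a then b else g x) A B"
proof -
  define f where "f x = (if x = a then b else g x)" for x
  have "bij_betw f (A - {a}) (B - {b})"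
    using assms(1) by (rule bij_betw_cong[THEN iffD1, rotated]) (simp add: f_def)
  then have "bij_betw f (A - {a} \<union> {a}) (B - {b} \<union> {f a})"
    by (intro notIn_Un_bij_betw) (simp_all add: f_def)
  with assms(2,3) show ?thesis
    by (simp add: f_def[abs_def] insert_absorb)
qed

lemma marked_tree_iso_if_far_end_map:
  assumes t1: "tree V1 E1" "m1 \<in> V1" and t2: "tree V2 E2" "m2 \<in> V2"
    and iso: "marked_line_graph_iso \<psi> E1 m1 E2 m2"
    and f: "bij_betw f V1 V2" "f m1 = m2"
    and f_far: "\<And>e. e \<in> E1 \<Longrightarrow> f (far_end E1 m1 e) = far_end E2 m2 (\<psi> e)"
  shows "marked_tree_iso V1 E1 m1 V2 E2 m2"
proof -
  note \<psi> = marked_line_graph_isoD[OF iso]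
  have \<psi>_mem: "\<psi> e \<in> E2" if "e \<in> E1" for e
    using bij_betw_apply[OF \<psi>(1) that] .
  have f_near: "f (near_end E1 m1 e) = near_end E2 m2 (\<psi> e)" if e: "e \<in> E1" for e
  proof (cases "m1 \<in> e")
    case True
    then show ?thesis
      using near_end_eq_marker_iff[OF t1 e] near_end_eq_marker_iff[OF t2 \<psi>_mem[OF e]] \<psi>(3)[OF e]
        f(2) by simp
  next
    case False
    then have "near_end E1 m1 e \<in> V1 - {m1}"
      using near_end_eq_marker_iff[OF t1 e] near_far_end_mem(1)[OF t1 e] tree_edge(2)[OF t1(1) e]
      by blast
    then obtain e' where e': "e' \<in> E1" "far_end E1 m1 e' = near_end E1 m1 e"
      using far_end_image[OF t1] by (metis imageE)
    then show ?thesis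
      using far_end_eq_near_end_image[OF t1 t2 iso e e'(1)] f_far[OF e'(1)] by simp
  qed
  have f_edge: "f ` e = \<psi> e" if e: "e \<in> E1" for e
  proof -
    have "f ` e = {f (near_end E1 m1 e), f (far_end E1 m1 e)}"
      by (subst near_far_end(1)[OF t1 e]) simp
    also have "\<dots> = {near_end E2 m2 (\<psi> e), far_end E2 m2 (\<psi> e)}"
      using f_near[OF e] f_far[OF e] by simp
    also have "\<dots> = \<psi> e"
      by (rule near_far_end(1)[OF t2 \<psi>_mem[OF e], symmetric])
    finally show ?thesis .
  qed
  have "(`) f ` E1 = E2"
    using f_edge bij_betw_imp_surj_on[OF \<psi>(1)] by (simp cong: image_cong)
  then show ?thesis
    using marked_tree_iso_if_edge_image[OF f tree_edge(2)[OF t1(1)]] by blast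
qed

lemma marked_tree_iso_if_marked_line_graph_iso:
  assumes t1: "tree V1 E1" "m1 \<in> V1" and t2: "tree V2 E2" "m2 \<in> V2"
    and iso: "marked_line_graph_iso \<psi> E1 m1 E2 m2"
  shows "marked_tree_iso V1 E1 m1 V2 E2 m2"
proof -
  have far1: "bij_betw (far_end E1 m1) E1 (V1 - {m1})"
    unfolding bij_betw_def using far_end_inj_on[OF t1] far_end_image[OF t1] ..
  have far2: "bij_betw (far_end E2 m2) E2 (V2 - {m2})"
    unfolding bij_betw_def using far_end_inj_on[OF t2] far_end_image[OF t2] ..
  define g where "g = far_end E2 m2 \<circ> \<psi> \<circ> inv_into E1 (far_end E1 m1)"
  define f where "f v = (if v = m1 then m2 else g v)" for v
  have "bij_betw g (V1 - {m1}) (V2 - {m2})"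
    unfolding g_def
    using bij_betw_trans[OF bij_betw_trans[OF bij_betw_inv_into[OF far1]
          marked_line_graph_isoD(1)[OF iso]] far2]
    by (simp add: comp_assoc)
  then have "bij_betw f V1 V2"
    unfolding f_def[abs_def] using t1(2) t2(2) by (rule bij_betw_if_point)
  moreover have "f m1 = m2"
    by (simp add: f_def)
  moreover have "f (far_end E1 m1 e) = far_end E2 m2 (\<psi> e)" if "e \<in> E1" for e
    using far_end_in_vertices[OF t1 that] bij_betw_inv_into_left[OF far1 that]
    by (simp add: f_def g_def)
  ultimately show ?thesis
    by (rule marked_tree_iso_if_far_end_map[OF t1 t2 iso])
qed

section \<open>Dual graphs\<close>

lemma dual_mult_Some_Some: "dual_mult E m (Some e) (Some f) = (if edges_meet e f then 1 else 0)"
  by (simp add: edges_meet_def)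

lemma dual_vertices_iff: "None \<in> dual_vertices E" "Some e \<in> dual_vertices E \<longleftrightarrow> e \<in> E"
  unfolding dual_vertices_def by auto

lemma dual_vertices_Diff_None: "dual_vertices E - {None} = Some ` E"
  unfolding dual_vertices_def by auto

lemma marked_line_graph_iso_if_dual_iso_fixes_None:
  assumes \<phi>: "bij_betw \<phi> (dual_vertices E1) (dual_vertices E2)" "\<phi> None = None"
    and mult: "\<forall>x\<in>dual_vertices E1. \<forall>y\<in>dual_vertices E1.
      dual_mult E2 m2 (\<phi> x) (\<phi> y) = dual_mult E1 m1 x y"
  shows "marked_line_graph_iso (\<lambda>e. the (\<phi> (Some e))) E1 m1 E2 m2"
proof -
  define \<psi> where "\<psi> e = the (\<phi> (Some e))" for e
  have "bij_betw \<phi> (Some ` E1) (Some ` E2)"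
    using bij_betw_DiffI[OF \<phi>(1), of "{None}" "{None}"] \<phi>(2)
    by (simp add: dual_vertices_Diff_None dual_vertices_def)
  then have \<phi>_Some: "\<phi> (Some e) = Some (\<psi> e)" "\<psi> e \<in> E2" if "e \<in> E1" for e
    using bij_betw_apply[of \<phi> "Some ` E1" "Some ` E2" "Some e"] that by (auto simp: \<psi>_def)
  have "bij_betw (the \<circ> \<phi> \<circ> Some) E1 E2"
  proof (rule bij_betw_trans[OF _ bij_betw_trans])
    show "bij_betw Some E1 (Some ` E1)"
      by (simp add: inj_on_imp_bij_betw)
    show "bij_betw \<phi> (Some ` E1) (Some ` E2)"
      by fact
    show "bij_betw the (Some ` E2) E2"
      by (simp add: bij_betw_def inj_on_def image_image)
  qed
  then have "bij_betw \<psi> E1 E2"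
    by (simp add: \<psi>_def[abs_def] comp_def)
  moreover have "edges_meet (\<psi> e) (\<psi> f) \<longleftrightarrow> edges_meet e f" if "e \<in> E1" "f \<in> E1" for e f
  proof -
    have "dual_mult E2 m2 (\<phi> (Some e)) (\<phi> (Some f)) = dual_mult E1 m1 (Some e) (Some f)"
      using mult that by (simp add: dual_vertices_iff)
    then show ?thesis
      using \<phi>_Some[OF that(1)] \<phi>_Some[OF that(2)]
      by (simp add: dual_mult_Some_Some del: dual_mult.simps split: if_splits)
  qed
  moreover have "m2 \<in> \<psi> e \<longleftrightarrow> m1 \<in> e" if "e \<in> E1" for e
  proof -
    have "dual_mult E2 m2 (\<phi> None) (\<phi> (Some e)) = dual_mult E1 m1 None (Some e)"
      using mult that by (simp add: dual_vertices_iff)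
    then show ?thesis
      using \<phi>_Some[OF that] \<phi>(2) by (simp split: if_splits)
  qed
  ultimately show ?thesis
    unfolding marked_line_graph_iso_def \<psi>_def by blast
qed

text \<open>Multiplicity 2 occurs only at the extra vertex and multiplicity 1 only between tree edges.
  As the extra vertex and \<open>e0\<close> swap roles, all multiplicities from either of them to another
  tree edge vanish.\<close>
lemma dual_iso_moving_None_isolates_edge:
  assumes \<phi>: "bij_betw \<phi> (dual_vertices E1) (dual_vertices E2)"
      "\<phi> None = Some a" "\<phi> (Some e0) = None"
    and mult: "\<forall>x\<in>dual_vertices E1. \<forall>y\<in>dual_vertices E1.
      dual_mult E2 m2 (\<phi> x) (\<phi> y) = dual_mult E1 m1 x y"
    and e0: "e0 \<in> E1" and f: "f \<in> E1" "f \<noteq> e0"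
  shows "e0 \<inter> f = {} \<and> m1 \<notin> f"
proof -
  have "\<phi> (Some f) \<noteq> \<phi> (Some e0)"
    using inj_onD[OF bij_betw_imp_inj_on[OF \<phi>(1)], of "Some f" "Some e0"] e0 f
    by (auto simp: dual_vertices_iff)
  moreover have "\<phi> (Some f) \<in> dual_vertices E2"
    using bij_betw_apply[OF \<phi>(1)] f(1) by (simp add: dual_vertices_iff)
  ultimately obtain g where g: "\<phi> (Some f) = Some g"
    using \<phi>(3) by (cases "\<phi> (Some f)") auto
  have "dual_mult E2 m2 (\<phi> (Some e0)) (\<phi> (Some f)) = dual_mult E1 m1 (Some e0) (Some f)"
    using mult e0 f(1) by (simp add: dual_vertices_iff)
  then have "e0 \<inter> f = {}"
    using \<phi>(3) g f(2) by (simp split: if_splits)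
  moreover have "dual_mult E2 m2 (\<phi> None) (\<phi> (Some f)) = dual_mult E1 m1 None (Some f)"
    using mult f(1) by (simp add: dual_vertices_iff)
  then have "m1 \<notin> f"
    using \<phi>(2) g by (simp split: if_splits)
  ultimately show ?thesis ..
qed

lemma marked_line_graph_iso_if_dual_iso_moves_None:
  assumes t1: "tree V1 E1" "m1 \<in> V1"
    and \<phi>: "bij_betw \<phi> (dual_vertices E1) (dual_vertices E2)" "\<phi> None \<noteq> None"
    and mult: "\<forall>x\<in>dual_vertices E1. \<forall>y\<in>dual_vertices E1.
      dual_mult E2 m2 (\<phi> x) (\<phi> y) = dual_mult E1 m1 x y"
  shows "\<exists>\<psi>. marked_line_graph_iso \<psi> E1 m1 E2 m2"
proof -
  obtain a where a: "\<phi> None = Some a"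
    using \<phi>(2) by (cases "\<phi> None") auto
  have image: "\<phi> ` dual_vertices E1 = dual_vertices E2"
    using \<phi>(1) by (rule bij_betw_imp_surj_on)
  then have "None \<in> \<phi> ` dual_vertices E1"
    by (simp add: dual_vertices_iff)
  then obtain e0 where e0: "e0 \<in> E1" "\<phi> (Some e0) = None"
    using a by (auto simp: dual_vertices_def)
  have E1: "E1 = {e0}"
    using tree_single_edge[OF t1 e0(1)]
      dual_iso_moving_None_isolates_edge[OF \<phi>(1) a e0(2) mult e0(1)] by blast
  with image have "insert None (Some ` E2) = {Some a, None}"
    using a e0(2) by (simp add: dual_vertices_def insert_commute)
  then have E2: "E2 = {a}"
    by (auto simp: set_eq_iff)
  have "dual_mult E2 m2 (\<phi> None) (\<phi> (Some e0)) = dual_mult E1 m1 None (Some e0)"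
    using mult e0(1) by (simp add: dual_vertices_iff)
  then have "m2 \<in> a \<longleftrightarrow> m1 \<in> e0"
    using a e0(2) by (simp split: if_splits)
  then have "marked_line_graph_iso (\<lambda>_. a) E1 m1 E2 m2"
    unfolding marked_line_graph_iso_def E1 E2 by (simp add: edges_meet_def)
  then show ?thesis by blast
qed

lemma marked_line_graph_iso_if_dual_iso:
  assumes "tree V1 E1" "m1 \<in> V1" "dual_iso E1 m1 E2 m2"
  obtains \<psi> where "marked_line_graph_iso \<psi> E1 m1 E2 m2"
proof -
  obtain \<phi> where \<phi>: "bij_betw \<phi> (dual_vertices E1) (dual_vertices E2)"
    and mult: "\<forall>x\<in>dual_vertices E1. \<forall>y\<in>dual_vertices E1.
      dual_mult E2 m2 (\<phi> x) (\<phi> y) = dual_mult E1 m1 x y"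
    using assms(3) unfolding dual_iso_def by blast
  show thesis
  proof (cases "\<phi> None = None")
    case True
    show thesis
      by (rule that[OF marked_line_graph_iso_if_dual_iso_fixes_None[OF \<phi> True mult]])
  next
    case False
    then show thesis
      using marked_line_graph_iso_if_dual_iso_moves_None[OF assms(1,2) \<phi> _ mult] that by blast
  qed
qed

theorem lemma5:
  fixes V1 :: "'a set" and E1 :: "'a set set" and m1 :: 'a
    and V2 :: "'b set" and E2 :: "'b set set" and m2 :: 'b
    and n :: nat
  assumes "marked_tree V1 E1 m1" and "marked_tree V2 E2 m2"
    and "card V1 = n" and "card V2 = n"
    and "dual_iso E1 m1 E2 m2"
  shows "marked_tree_iso V1 E1 m1 V2 E2 m2"
proof -
  have t1: "tree V1 E1" "m1 \<in> V1" and t2: "tree V2 E2" "m2 \<in> V2"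
    using assms(1,2) unfolding marked_tree_def by blast+
  obtain \<psi> where "marked_line_graph_iso \<psi> E1 m1 E2 m2"
    using marked_line_graph_iso_if_dual_iso[OF t1 assms(5)] .
  then show ?thesis
    by (rule marked_tree_iso_if_marked_line_graph_iso[OF t1 t2])
qed

end
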